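(* For every $n\geq1$, the number of $n$-multisets of $[n]$ in which no integer other than $n$ occurs exactly once equals the coefficient of $z^n$ in $\frac{1-3z-\sqrt{1-2z-3z^2}}{6z-2}$, i.e. the $n$-th term of OEIS sequence A005773 ($1,1,2,5,13,35,96,\dots$ indexed from $n=0$).
   Context: An $n$-multiset of $[n]=\{1,\dots,n\}$ is a collection of $n$ elements of $[n]$ in which elements may be repeated; the multiplicity of an integer is the number of times it occurs. The condition is that every $j\in\{1,\dots,n-1\}$ has multiplicity different from $1$ (the multiplicity of $n$ is unrestricted). *)

theory Defs
  imports "HOL-Library.Multiset" "HOL-Computational_Algebra.Formal_Power_Series"
begin

text \<open>The formal power series sqrt(1 - 2z - 3z^2) (principal branch, constant term 1),
  realised as the library's formal radical of order 2 with the real square root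
  on the constant coefficient.\<close>
definition sqrt_A005773 :: "real fps" where
  "sqrt_A005773 = fps_radical (\<lambda>k x. root k x) 2 (1 - 2 * fps_X - 3 * fps_X ^ 2)"

definition gf_A005773 :: "real fps" where
  "gf_A005773 = (1 - 3 * fps_X - sqrt_A005773) / (6 * fps_X - 2)"

definition good_multisets :: "nat \<Rightarrow> nat multiset set" where
  "good_multisets n = {M. set_mset M \<subseteq> {1..n} \<and> size M = n \<and>
                          (\<forall>j\<in>{1..n-1}. count M j \<noteq> 1)}"

end

theory Submission
  imports Defs
begin

text \<open>Removing the copies of \<open>n\<close> identifies the multisets counted by \<open>good_multisets n\<close>
  with the multisets of size at most \<open>n\<close> on \<open>{1..n-1}\<close> in which no element occurs exactly
  once. Choosing the \<open>k\<close> elements that occur, each with multiplicity at least 2, there are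
  \<open>\<Sum>k. C(n-1,k) C(n-k,k)\<close> of them. Zeilberger's algorithm gives a three-term recurrence
  for these sums, and the coefficients of \<open>G = gf_A005773\<close> satisfy the same recurrence,
  because \<open>R = 1 + 2G = sqrt((1+z)/(1-3z))\<close> solves \<open>(1 - 2z - 3z\<^sup>2) R' = 2R\<close>.
  Both sequences start with 1, 2.\<close>

section \<open>The generating function\<close>

lemma sqrt_A005773_squared: "sqrt_A005773 ^ 2 = 1 - 2 * fps_X - 3 * fps_X ^ 2"
proof -
  let ?a = "1 - 2 * fps_X - 3 * fps_X ^ 2 :: real fps"
  have "fps_nth ?a 0 = 1" by simp
  then have "fps_radical (\<lambda>k x. root k x) (Suc 1) ?a ^ Suc 1 = ?a"
    using power_radical[of ?a "\<lambda>k x. root k x" 1] by simp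
  then show ?thesis
    unfolding sqrt_A005773_def by (simp add: numeral_2_eq_2)
qed

lemma sqrt_A005773_eq: "sqrt_A005773 = (1 - 3 * fps_X) * (1 + 2 * gf_A005773)"
proof -
  have "fps_nth (6 * fps_X - 2 :: real fps) 0 \<noteq> 0" by simp
  then have "gf_A005773 * (6 * fps_X - 2) = 1 - 3 * fps_X - sqrt_A005773"
    unfolding gf_A005773_def by (intro fps_times_divide_eq fps_nonzeroI[of _ 0]) simp_all
  then show ?thesis
    by (simp add: algebra_simps)
qed

lemma gf_A005773_quadratic: "(1 - 3 * fps_X) * (1 + 2 * gf_A005773) ^ 2 = 1 + fps_X"
proof -
  have "(1 - 3 * fps_X) * ((1 - 3 * fps_X) * (1 + 2 * gf_A005773) ^ 2) = sqrt_A005773 ^ 2"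
    unfolding sqrt_A005773_eq power_mult_distrib by (simp only: power2_eq_square mult.assoc)
  also have "\<dots> = (1 - 3 * fps_X) * (1 + fps_X)"
    unfolding sqrt_A005773_squared by (simp add: algebra_simps power2_eq_square)
  finally show ?thesis
    using mult_left_cancel[OF fps_nonzeroI[of "1 - 3 * fps_X :: real fps" 0]] by simp
qed

lemma fps_deriv_eq_of_quadratic:
  fixes R :: "real fps"
  assumes quadratic: "(1 - 3 * fps_X) * R ^ 2 = 1 + fps_X"
  shows "(1 - 2 * fps_X - 3 * fps_X ^ 2) * fps_deriv R = 2 * R"
proof -
  let ?c = "1 - 3 * fps_X :: real fps"
  have "fps_deriv (?c * R ^ 2) = ?c * (2 * R * fps_deriv R) - 3 * R ^ 2"
    by (simp add: power2_eq_square algebra_simps)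
  then have derived: "?c * (2 * R * fps_deriv R) = 1 + 3 * R ^ 2"
    unfolding quadratic by (simp add: algebra_simps)
  have "2 * (?c ^ 2 * R * fps_deriv R) = ?c * (?c * (2 * R * fps_deriv R))"
    by (simp add: power2_eq_square algebra_simps)
  also have "\<dots> = ?c + 3 * (?c * R ^ 2)"
    unfolding derived by (simp add: algebra_simps)
  also have "\<dots> = 2 * 2"
    unfolding quadratic by (simp add: algebra_simps)
  finally have "2 * (?c ^ 2 * R * fps_deriv R) = 2 * 2" .
  moreover have "(2 :: real fps) \<noteq> 0"
    by simp
  ultimately have product: "?c ^ 2 * R * fps_deriv R = 2"
    using mult_left_cancel by blast
  have "?c * (?c * R ^ 2) * fps_deriv R = (?c ^ 2 * R * fps_deriv R) * R"
    by (simp add: power2_eq_square mult_ac)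
  then have "?c * (?c * R ^ 2) * fps_deriv R = 2 * R"
    unfolding product .
  moreover have "?c * (1 + fps_X) = 1 - 2 * fps_X - 3 * fps_X ^ 2"
    by (simp add: power2_eq_square algebra_simps)
  ultimately show ?thesis
    unfolding quadratic by simp
qed

lemma fps_nth_quadratic_times:
  fixes D :: "'a::comm_ring_1 fps"
  shows "fps_nth ((1 - 2 * fps_X - 3 * fps_X ^ 2) * D) n = fps_nth D n
           - 2 * (if n = 0 then 0 else fps_nth D (n - 1)) - 3 * (if n < 2 then 0 else fps_nth D (n - 2))"
proof -
  have "(1 - 2 * fps_X - 3 * fps_X ^ 2) * D = D - 2 * (fps_X * D) - 3 * (fps_X ^ 2 * D)"
    by (simp add: algebra_simps)
  then show ?thesis
    by (simp add: fps_X_power_mult_nth numeral_fps_const)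
qed

lemmas gf_A005773_ode = fps_deriv_eq_of_quadratic[OF gf_A005773_quadratic]

lemma gf_A005773_nth_0: "fps_nth gf_A005773 0 = 0"
  using arg_cong[OF sqrt_A005773_eq, of "\<lambda>f. fps_nth f 0"]
  unfolding sqrt_A005773_def by (simp add: fps_numeral_fps_const)

lemma gf_A005773_nth_1_2: "fps_nth gf_A005773 1 = 1" "fps_nth gf_A005773 2 = 2"
proof -
  have "fps_nth ((1 - 2 * fps_X - 3 * fps_X ^ 2) * fps_deriv (1 + 2 * gf_A005773)) n
      = fps_nth (2 * (1 + 2 * gf_A005773)) n" for n
    unfolding gf_A005773_ode ..
  from this[of 0] this[of 1] gf_A005773_nth_0
  show "fps_nth gf_A005773 1 = 1" "fps_nth gf_A005773 2 = 2"
    unfolding fps_nth_quadratic_times by (simp_all add: fps_numeral_fps_const numeral_2_eq_2)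
qed

lemma gf_A005773_nth_recurrence:
  "real (m + 3) * fps_nth gf_A005773 (m + 3)
     = 2 * real (m + 3) * fps_nth gf_A005773 (m + 2) + 3 * real (m + 1) * fps_nth gf_A005773 (m + 1)"
proof -
  have "fps_nth ((1 - 2 * fps_X - 3 * fps_X ^ 2) * fps_deriv (1 + 2 * gf_A005773)) (m + 2)
      = fps_nth (2 * (1 + 2 * gf_A005773)) (m + 2)"
    unfolding gf_A005773_ode ..
  then show ?thesis
    unfolding fps_nth_quadratic_times
    by (simp add: fps_numeral_fps_const algebra_simps eval_nat_numeral)
qed

section \<open>Counting multisets without singletons\<close>

definition singleton_free_msets :: "'a set \<Rightarrow> nat \<Rightarrow> 'a multiset set" where
  "singleton_free_msets A s = {M. set_mset M \<subseteq> A \<and> size M \<le> s \<and> (\<forall>x. count M x \<noteq> 1)}"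

lemma singleton_free_msets_empty [simp]: "singleton_free_msets {} s = {{#}}"
  unfolding singleton_free_msets_def by auto

lemma count_eq_0_if_singleton_free_msets:
  "M \<in> singleton_free_msets A s \<Longrightarrow> a \<notin> A \<Longrightarrow> count M a = 0"
  unfolding singleton_free_msets_def by (auto simp: count_eq_zero_iff)

lemma singleton_free_msets_insert:
  assumes "a \<notin> A"
  shows "singleton_free_msets (insert a A) s = singleton_free_msets A s \<union>
           (\<Union>t<s - 1. (\<lambda>M. M + replicate_mset (s - t) a) ` singleton_free_msets A t)"
    (is "?lhs = _ \<union> (\<Union>t<s - 1. ?pad t ` _)")
proof (intro equalityI subsetI)
  fix M assume M: "M \<in> ?lhs"
  let ?c = "count M a" and ?rest = "filter_mset (\<lambda>x. x \<noteq> a) M"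
  have M_eq: "M = ?rest + replicate_mset ?c a"
    by (rule multiset_eqI) simp
  show "M \<in> singleton_free_msets A s \<union> (\<Union>t<s - 1. ?pad t ` singleton_free_msets A t)"
  proof (cases "?c = 0")
    case True
    then have "set_mset M \<subseteq> A"
      using M unfolding singleton_free_msets_def by (auto simp: count_eq_zero_iff)
    then show ?thesis
      using M unfolding singleton_free_msets_def by auto
  next
    case False
    have M_props: "set_mset M \<subseteq> insert a A" "size M \<le> s" "?c \<noteq> 1" "\<forall>x. count M x \<noteq> 1"
      using M unfolding singleton_free_msets_def by auto
    have size_M: "size M = size ?rest + ?c"
      using arg_cong[OF M_eq, of size] by simp
    define t where "t = s - ?c"
    have t: "t < s - 1" "s - t = ?c"
      using False M_props(2,3) size_M unfolding t_def by linarith+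
    have "?rest \<in> singleton_free_msets A t"
      using M_props size_M unfolding singleton_free_msets_def t_def by auto
    then have "M \<in> ?pad t ` singleton_free_msets A t"
      using M_eq t(2) by (metis image_eqI)
    then show ?thesis
      using t(1) by blast
  qed
next
  fix M assume "M \<in> singleton_free_msets A s \<union> (\<Union>t<s - 1. ?pad t ` singleton_free_msets A t)"
  then show "M \<in> ?lhs"
  proof
    assume "M \<in> singleton_free_msets A s"
    then show ?thesis unfolding singleton_free_msets_def by auto
  next
    assume "M \<in> (\<Union>t<s - 1. ?pad t ` singleton_free_msets A t)"
    then obtain t M' where t: "t < s - 1" and M': "M' \<in> singleton_free_msets A t" and "M = ?pad t M'"
      by blast
    moreover have "count M' a = 0"
      using M' assms by (rule count_eq_0_if_singleton_free_msets)
    ultimately show ?thesis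
      using M' unfolding singleton_free_msets_def by auto
  qed
qed

lemma finite_singleton_free_msets: "finite A \<Longrightarrow> finite (singleton_free_msets A s)"
proof (induction A arbitrary: s rule: finite_induct)
  case (insert a A)
  then show ?case by (simp add: singleton_free_msets_insert)
qed simp

lemma sum_choose_diff_lessThan: "(\<Sum>t<N. (t - k) choose k) = (N - k) choose Suc k"
proof (induction N)
  case (Suc N)
  then show ?case
    by (cases "k \<le> N") (simp_all add: Suc_diff_le binomial_eq_0)
qed simp

definition singleton_free_count :: "nat \<Rightarrow> nat \<Rightarrow> nat" where
  "singleton_free_count m s = (\<Sum>k\<le>m. (m choose k) * ((s - k) choose k))"

lemma singleton_free_count_0 [simp]: "singleton_free_count 0 s = 1"
  unfolding singleton_free_count_def by simp

lemma singleton_free_count_Suc: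
  "singleton_free_count (Suc m) s = singleton_free_count m s + (\<Sum>t<s - 1. singleton_free_count m t)"
proof -
  have "singleton_free_count (Suc m) s =
          1 + (\<Sum>k\<le>m. ((m choose k) + (m choose Suc k)) * ((s - Suc k) choose Suc k))"
    unfolding singleton_free_count_def by (simp add: sum.atMost_Suc_shift del: sum.atMost_Suc)
  moreover have "singleton_free_count m s = 1 + (\<Sum>k\<le>m. (m choose Suc k) * ((s - Suc k) choose Suc k))"
  proof -
    have "singleton_free_count m s = (\<Sum>k\<le>Suc m. (m choose k) * ((s - k) choose k))"
      unfolding singleton_free_count_def by simp
    then show ?thesis
      by (simp add: sum.atMost_Suc_shift del: sum.atMost_Suc)
  qed
  moreover have "(\<Sum>t<s - 1. singleton_free_count m t) = (\<Sum>k\<le>m. (m choose k) * ((s - Suc k) choose Suc k))"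
  proof -
    have "(\<Sum>t<s - 1. singleton_free_count m t) = (\<Sum>k\<le>m. (m choose k) * (\<Sum>t<s - 1. (t - k) choose k))"
      unfolding singleton_free_count_def sum_distrib_left by (rule sum.swap)
    then show ?thesis
      by (simp add: sum_choose_diff_lessThan)
  qed
  ultimately show ?thesis
    by (simp add: sum.distrib distrib_right)
qed

lemma card_singleton_free_msets:
  "finite A \<Longrightarrow> card (singleton_free_msets A s) = singleton_free_count (card A) s"
proof (induction A arbitrary: s rule: finite_induct)
  case (insert a A)
  let ?pad = "\<lambda>t M. M + replicate_mset (s - t) a"
  have count_a_pad: "?pad t ` singleton_free_msets A t \<subseteq> {M. count M a = s - t}" for t
    using count_eq_0_if_singleton_free_msets[OF _ insert.hyps(2)] by auto
  have count_a_0: "singleton_free_msets A s \<subseteq> {M. count M a = 0}"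
    using count_eq_0_if_singleton_free_msets[OF _ insert.hyps(2)] by auto
  have card_pad: "card (?pad t ` singleton_free_msets A t) = singleton_free_count (card A) t" for t
    by (simp add: card_image inj_on_def insert.IH)
  have "card (\<Union>t<s - 1. ?pad t ` singleton_free_msets A t) = (\<Sum>t<s - 1. singleton_free_count (card A) t)"
  proof (subst card_UN_disjoint)
    show "\<forall>t\<in>{..<s - 1}. \<forall>t'\<in>{..<s - 1}. t \<noteq> t' \<longrightarrow>
            ?pad t ` singleton_free_msets A t \<inter> ?pad t' ` singleton_free_msets A t' = {}"
    proof (intro ballI impI)
      fix t t' assume "t \<in> {..<s - 1}" "t' \<in> {..<s - 1}" "t \<noteq> t'"
      then have "{M. count M a = s - t} \<inter> {M. count M a = s - t'} = {}" by auto
      then show "?pad t ` singleton_free_msets A t \<inter> ?pad t' ` singleton_free_msets A t' = {}"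
        using Int_mono[OF count_a_pad[of t] count_a_pad[of t']] by blast
    qed
  qed (simp_all add: finite_singleton_free_msets insert.hyps card_pad)
  moreover have "singleton_free_msets A s \<inter> (\<Union>t<s - 1. ?pad t ` singleton_free_msets A t) = {}"
  proof -
    have "?pad t ` singleton_free_msets A t \<subseteq> {M. count M a \<noteq> 0}" if "t < s - 1" for t
      using count_a_pad[of t] that by auto
    then show ?thesis
      using count_a_0 by blast
  qed
  ultimately show ?case
    unfolding singleton_free_msets_insert[OF insert.hyps(2)]
    by (subst card_Un_disjoint) (simp_all add: finite_singleton_free_msets insert insert.IH singleton_free_count_Suc)
qed simp

lemma card_msets_singleton_free_except:
  assumes "a \<notin> A"
  shows "card {M. set_mset M \<subseteq> insert a A \<and> size M = s \<and> (\<forall>x\<in>A. count M x \<noteq> 1)}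
           = card (singleton_free_msets A s)"
    (is "card ?S = _")
proof -
  let ?rest = "filter_mset (\<lambda>x. x \<noteq> a)" and ?pad = "\<lambda>M. M + replicate_mset (s - size M) a"
  have size_rest: "size (?rest M) + count M a = size M" for M :: "'a multiset"
    using size_filter_mset_lesseq[of "\<lambda>x. x \<noteq> a" M] multiset_partition[of M "\<lambda>x. x \<noteq> a"]
    by (metis filter_eq_replicate_mset size_replicate_mset size_union)
  have "bij_betw ?rest ?S (singleton_free_msets A s)"
  proof (rule bij_betw_byWitness[where f' = ?pad])
    show "\<forall>M\<in>?S. ?pad (?rest M) = M"
    proof
      fix M assume "M \<in> ?S"
      then have "s - size (?rest M) = count M a"
        using size_rest[of M] by simp
      then show "?pad (?rest M) = M"
        by (intro multiset_eqI) simp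
    qed
    show "\<forall>M\<in>singleton_free_msets A s. ?rest (?pad M) = M"
    proof
      fix M assume "M \<in> singleton_free_msets A s"
      then have "count M a = 0"
        using assms by (rule count_eq_0_if_singleton_free_msets)
      then show "?rest (?pad M) = M"
        by (intro multiset_eqI) simp
    qed
    show "?rest ` ?S \<subseteq> singleton_free_msets A s"
    proof (intro image_subsetI)
      fix M assume M: "M \<in> ?S"
      have "count M x \<noteq> 1" if "x \<noteq> a" for x
      proof
        assume "count M x = 1"
        then have "x \<in># M"
          using count_greater_zero_iff[of M x] by simp
        then show False
          using M that \<open>count M x = 1\<close> by auto
      qed
      then show "?rest M \<in> singleton_free_msets A s"
        using M size_rest[of M] unfolding singleton_free_msets_def by auto
    qed
    show "?pad ` singleton_free_msets A s \<subseteq> ?S"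
    proof (intro image_subsetI)
      fix M assume M: "M \<in> singleton_free_msets A s"
      then have "count M a = 0"
        using assms by (rule count_eq_0_if_singleton_free_msets)
      then show "?pad M \<in> ?S"
        using M assms unfolding singleton_free_msets_def by auto
    qed
  qed
  then show ?thesis
    by (rule bij_betw_same_card)
qed

lemma card_good_multisets: "card (good_multisets (m + 1)) = singleton_free_count m (m + 1)"
proof -
  have "good_multisets (m + 1) = {M. set_mset M \<subseteq> insert (m + 1) {1..m} \<and> size M = m + 1
      \<and> (\<forall>x\<in>{1..m}. count M x \<noteq> 1)}"
    unfolding good_multisets_def by (simp add: atLeastAtMostSuc_conv)
  then show ?thesis
    using card_msets_singleton_free_except[of "m + 1" "{1..m}"] card_singleton_free_msets[of "{1..m}"]
    by simp
qed

section \<open>A recurrence for the diagonal counts\<close>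

lemma real_Suc_times_Suc_choose_Suc:
  "real (Suc k) * real (Suc n choose Suc k) = real (Suc n) * real (n choose k)"
  by (simp only: of_nat_mult[symmetric] Suc_times_binomial)

lemma real_Suc_times_choose_Suc:
  "real (Suc k) * real (n choose Suc k) = (real n - real k) * real (n choose k)"
proof (cases "k \<le> n")
  case True
  have "Suc k * (n choose Suc k) = (n - k) * (n choose k)"
    using binomial_absorb_comp binomial_absorption by presburger
  then have "real (Suc k * (n choose Suc k)) = real ((n - k) * (n choose k))"
    by (rule arg_cong)
  then show ?thesis
    using True by (simp only: of_nat_mult of_nat_diff)
qed (simp add: binomial_eq_0)

lemma real_Suc_times_choose:
  "real (Suc n) * real (n choose k) = (real (Suc n) - real k) * real (Suc n choose k)"
proof -
  have "real (Suc n * (n choose k)) = real (Suc k * (Suc n choose Suc k))"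
    by (simp only: Suc_times_binomial_eq mult.commute)
  then show ?thesis
    unfolding of_nat_mult real_Suc_times_choose_Suc .
qed

definition a005773_term :: "nat \<Rightarrow> nat \<Rightarrow> real" where
  "a005773_term m k = real (m choose k) * real ((m + 1 - k) choose k)"

text \<open>The certificate found by Zeilberger's algorithm.\<close>

definition a005773_certificate :: "nat \<Rightarrow> nat \<Rightarrow> real" where
  "a005773_certificate m k =
     (4 * real m + 6 - 4 * real k) * real ((m + 1) choose k) * real ((m + 1 - k) choose k)"

text \<open>The telescoping identity for \<open>m = k + x\<close>, with every binomial coefficient expressed
  through \<open>P = C(k+x+1,k)\<close> or \<open>Q = C(x+1,k)\<close> by the absorption identities.\<close>

lemma a005773_certificate_identity:
  fixes j y b1 b2 b3 b4 b5 b6 P Q :: real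
  assumes "(j + 1) * b1 = (j + y + 2) * P" "(j + 1) * b3 = (y + 1) * P" "(j + y + 1) * b5 = y * b3"
    and "(j + 1) * b2 = (y + 2) * Q" "(j + 1) * b4 = (y + 1 - j) * Q" "(y + 1) * b6 = (y - j) * b4"
    and "j + 1 \<noteq> 0" "y + 1 \<noteq> 0"
  shows "(j + y + 3) * b1 * b2 - 2 * (j + y + 3) * b3 * b4 - 3 * (j + y + 1) * b5 * b6
           = (4 * (j + y) + 6 - 4 * j) * P * Q - (4 * (j + y) + 6 - 4 * (j + 1)) * b3 * b6"
  using assms by algebra

lemma a005773_term_telescoping:
  "real (m + 3) * a005773_term (m + 2) (Suc k) - 2 * real (m + 3) * a005773_term (m + 1) (Suc k)
     - 3 * real (m + 1) * a005773_term m (Suc k)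
   = a005773_certificate m k - a005773_certificate m (Suc k)"
proof (cases "k \<le> m")
  case True
  then obtain x where m: "m = k + x" using le_Suc_ex by blast
  define j y where "j = real k" and "y = real x"
  define P Q where "P = real ((k + x + 1) choose k)" and "Q = real ((x + 1) choose k)"
  define b1 b2 where "b1 = real ((k + x + 2) choose Suc k)" and "b2 = real ((x + 2) choose Suc k)"
  define b3 b4 where "b3 = real ((k + x + 1) choose Suc k)" and "b4 = real ((x + 1) choose Suc k)"
  define b5 b6 where "b5 = real ((k + x) choose Suc k)" and "b6 = real (x choose Suc k)"
  have relations:
    "(j + 1) * b1 = (j + y + 2) * P" "(j + 1) * b3 = (y + 1) * P" "(j + y + 1) * b5 = y * b3"
    "(j + 1) * b2 = (y + 2) * Q" "(j + 1) * b4 = (y + 1 - j) * Q" "(y + 1) * b6 = (y - j) * b4"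
    using real_Suc_times_Suc_choose_Suc[of k "k + x + 1"] real_Suc_times_choose_Suc[of k "k + x + 1"]
      real_Suc_times_choose[of "k + x" "Suc k"] real_Suc_times_Suc_choose_Suc[of k "x + 1"]
      real_Suc_times_choose_Suc[of k "x + 1"] real_Suc_times_choose[of x "Suc k"]
    unfolding j_def y_def P_def Q_def b1_def b2_def b3_def b4_def b5_def b6_def
    by (simp_all add: algebra_simps del: binomial_Suc_Suc)
  have nonzero: "j + 1 \<noteq> 0" "y + 1 \<noteq> 0"
    unfolding j_def y_def by simp_all
  have terms: "a005773_term (m + 2) (Suc k) = b1 * b2" "a005773_term (m + 1) (Suc k) = b3 * b4"
    "a005773_term m (Suc k) = b5 * b6"
    "a005773_certificate m k = (4 * (j + y) + 6 - 4 * j) * P * Q"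
    "a005773_certificate m (Suc k) = (4 * (j + y) + 6 - 4 * (j + 1)) * b3 * b6"
    "real (m + 3) = j + y + 3" "real (m + 1) = j + y + 1"
    unfolding a005773_term_def a005773_certificate_def m j_def y_def P_def Q_def
      b1_def b2_def b3_def b4_def b5_def b6_def
    by (simp_all del: binomial_Suc_Suc)
  show ?thesis
    using a005773_certificate_identity[OF relations nonzero]
    unfolding terms by (simp only: mult.assoc)
next
  case False
  then show ?thesis
    unfolding a005773_term_def a005773_certificate_def by (simp add: binomial_eq_0)
qed

lemma singleton_free_count_diagonal_eq_sum:
  assumes "m \<le> N"
  shows "real (singleton_free_count m (m + 1)) = (\<Sum>k\<le>N. a005773_term m k)"
proof -
  have "real (singleton_free_count m (m + 1)) = (\<Sum>k\<le>m. a005773_term m k)"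
    unfolding singleton_free_count_def a005773_term_def by simp
  also have "\<dots> = (\<Sum>k\<le>N. a005773_term m k)"
    using assms by (intro sum.mono_neutral_left) (auto simp: a005773_term_def binomial_eq_0)
  finally show ?thesis .
qed

lemma singleton_free_count_diagonal_recurrence:
  "real (m + 3) * real (singleton_free_count (m + 2) (m + 3))
     = 2 * real (m + 3) * real (singleton_free_count (m + 1) (m + 2))
       + 3 * real (m + 1) * real (singleton_free_count m (m + 1))"
proof -
  define E where "E = (\<lambda>k. real (m + 3) * a005773_term (m + 2) k
    - 2 * real (m + 3) * a005773_term (m + 1) k - 3 * real (m + 1) * a005773_term m k)"
  have E_0: "E 0 = - a005773_certificate m 0"
    unfolding E_def a005773_term_def a005773_certificate_def by (simp add: algebra_simps)
  have E_Suc: "E (Suc k) = a005773_certificate m k - a005773_certificate m (Suc k)" for k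
    unfolding E_def by (rule a005773_term_telescoping)
  have "(\<Sum>k\<le>m + 2. E k) = E 0 + (\<Sum>k\<le>m + 1. E (Suc k))"
    by (simp add: sum.atMost_Suc_shift del: sum.atMost_Suc)
  also have "\<dots> = - a005773_certificate m 0
      + (\<Sum>k\<le>m + 1. a005773_certificate m k - a005773_certificate m (Suc k))"
    by (simp only: E_0 E_Suc)
  also have "\<dots> = 0"
    unfolding sum_telescope by (simp add: a005773_certificate_def)
  finally have "(\<Sum>k\<le>m + 2. E k) = 0" .
  then have sums_eq: "real (m + 3) * (\<Sum>k\<le>m + 2. a005773_term (m + 2) k)
      - 2 * real (m + 3) * (\<Sum>k\<le>m + 2. a005773_term (m + 1) k)
      - 3 * real (m + 1) * (\<Sum>k\<le>m + 2. a005773_term m k) = 0"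
    unfolding E_def sum_subtractf sum_distrib_left .
  have sums:
    "real (singleton_free_count m (m + 1)) = (\<Sum>k\<le>m + 2. a005773_term m k)"
    "real (singleton_free_count (m + 1) (m + 2)) = (\<Sum>k\<le>m + 2. a005773_term (m + 1) k)"
    "real (singleton_free_count (m + 2) (m + 3)) = (\<Sum>k\<le>m + 2. a005773_term (m + 2) k)"
    using singleton_free_count_diagonal_eq_sum[of m "m + 2"]
      singleton_free_count_diagonal_eq_sum[of "m + 1" "m + 2"]
      singleton_free_count_diagonal_eq_sum[of "m + 2" "m + 2"]
    by (simp_all add: eval_nat_numeral)
  show ?thesis
    using sums_eq unfolding sums by linarith
qed

lemma linear_recurrence_2_unique:
  fixes f g :: "nat \<Rightarrow> 'a::field"
  assumes "f 0 = g 0" "f 1 = g 1" "\<And>n. c n \<noteq> 0"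
    and "\<And>n. c n * f (n + 2) = a n * f (n + 1) + b n * f n"
    and "\<And>n. c n * g (n + 2) = a n * g (n + 1) + b n * g n"
  shows "f n = g n"
proof -
  have "f n = g n \<and> f (Suc n) = g (Suc n)"
  proof (induction n)
    case 0
    show ?case using assms(1,2) by simp
  next
    case (Suc n)
    have "c n * f (n + 2) = c n * g (n + 2)"
      using assms(4,5)[of n] Suc.IH by simp
    then show ?case
      using assms(3)[of n] Suc.IH by simp
  qed
  then show ?thesis ..
qed

lemma singleton_free_count_diagonal_eq_gf_A005773:
  "real (singleton_free_count m (m + 1)) = fps_nth gf_A005773 (m + 1)"
proof (rule linear_recurrence_2_unique[where f = "\<lambda>m. real (singleton_free_count m (m + 1))"
      and g = "\<lambda>m. fps_nth gf_A005773 (m + 1)" and c = "\<lambda>m. real (m + 3)"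
      and a = "\<lambda>m. 2 * real (m + 3)" and b = "\<lambda>m. 3 * real (m + 1)"])
  show "real (singleton_free_count 0 (0 + 1)) = fps_nth gf_A005773 (0 + 1)"
    "real (singleton_free_count 1 (1 + 1)) = fps_nth gf_A005773 (1 + 1)"
    using gf_A005773_nth_1_2 by (simp_all add: singleton_free_count_def numeral_2_eq_2)
  show "real (k + 3) * real (singleton_free_count (k + 2) (k + 2 + 1))
      = 2 * real (k + 3) * real (singleton_free_count (k + 1) (k + 1 + 1))
        + 3 * real (k + 1) * real (singleton_free_count k (k + 1))" for k
    using singleton_free_count_diagonal_recurrence[of k] by (simp add: eval_nat_numeral)
  show "real (k + 3) * fps_nth gf_A005773 (k + 2 + 1)
      = 2 * real (k + 3) * fps_nth gf_A005773 (k + 1 + 1) + 3 * real (k + 1) * fps_nth gf_A005773 (k + 1)"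
    for k
    using gf_A005773_nth_recurrence[of k] by (simp add: eval_nat_numeral)
qed simp

theorem theorem4:
  fixes n :: nat
  assumes "n \<ge> 1"
  shows "real (card (good_multisets n)) = fps_nth gf_A005773 n"
proof -
  obtain m where "n = m + 1"
    using assms by (metis le_add_diff_inverse2)
  then show ?thesis
    using card_good_multisets[of m] singleton_free_count_diagonal_eq_gf_A005773[of m] by simp
qed

end
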